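(* Let $r\ge 0$ and $k\ge r$ be integers and let $t$ be an integer with $2\le t\le r+1$. Let $\Omega=\lfloor tr/(t-1)\rfloor+1$, $a=t(r+1)+(1-t)\Omega$, $b=t-1-a$. Then \[t\binom{k+2-(r+1)}{2}-b\binom{k+2-\Omega}{2}-a\binom{k+2-(\Omega+1)}{2}=\binom{k+2}{2}-\binom{r+2}{2}-\sum_{j=1}^{k-r}(r+j+1-j\,t)_+ .\]
   Context: $(x)_+=\max(x,0)$; an empty sum is $0$. Binomial coefficients follow the convention $\binom{m}{2}=m(m-1)/2$ for integers $m\ge 2$ and $\binom{m}{2}=0$ for $m<2$. *)

theory Defs
  imports Main
begin

definition binom2 :: "int \<Rightarrow> int" where
  "binom2 m = (if m \<ge> 2 then m * (m - 1) div 2 else 0)"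

definition pos_part :: "int \<Rightarrow> int" where
  "pos_part x = max x 0"

end

theory Submission
  imports Defs
begin

text \<open>
  Divide \<open>r\<close> by \<open>s = t - 1\<close> as \<open>r + 1 = s m + c\<close> with \<open>1 \<le> c \<le> s\<close>; then
  \<open>\<Omega> = r + m + 1\<close>, \<open>a = c\<close> and \<open>b = s - c\<close>. Both sides vanish at \<open>k = r\<close>. Since
  \<open>binom2 (n + 1) - binom2 n = (n)\<^sub>+\<close>, raising \<open>k\<close> by one raises the left side by
  \<open>(s + 1) n - (s - c) (n - m)\<^sub>+ - c (n - m - 1)\<^sub>+\<close> and the right side by
  \<open>k + 2 - (r + 1 - s n)\<^sub>+\<close>, where \<open>n = k + 1 - r\<close>; comparing the cases \<open>n \<le> m\<close> and
  \<open>n > m\<close>, both equal \<open>n + min (s n) (r + 1)\<close>.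
\<close>

lemma binom2_succ: "binom2 (n + 1) = binom2 n + pos_part n"
proof -
  consider "n \<ge> 2" | "n = 1" | "n \<le> 0" by linarith
  then show ?thesis
  proof cases
    case 1
    have "(n + 1) * (n + 1 - 1) = n * (n - 1) + n * 2" by algebra
    then show ?thesis using 1 unfolding binom2_def pos_part_def by simp
  qed (auto simp: binom2_def pos_part_def)
qed

lemma pos_part_increment:
  fixes s m c n :: int
  assumes c: "1 \<le> c" "c \<le> s" and n: "n \<ge> 0"
  shows "(s + 1) * pos_part n - (s - c) * pos_part (n - m) - c * pos_part (n - m - 1)
           + pos_part (s * m + c - s * n) = n + s * m + c"
proof (cases "n \<le> m")
  case True
  have "s * n \<le> s * m" using True c by (simp add: mult_left_mono)
  then have "s * m + c - s * n \<ge> 0" using c by linarith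
  then have "pos_part (s * m + c - s * n) = s * m + c - s * n" by (simp add: pos_part_def)
  then show ?thesis using True n by (simp add: pos_part_def algebra_simps)
next
  case False
  have "s * (m + 1) \<le> s * n" using False c by (simp add: mult_left_mono)
  then have "pos_part (s * m + c - s * n) = 0" using c by (simp add: pos_part_def algebra_simps)
  then show ?thesis using False n by (simp add: pos_part_def algebra_simps)
qed

lemma binom2_identity_by_remainder:
  fixes r k s m c :: int
  assumes r: "r \<ge> 0" and c: "1 \<le> c" "c \<le> s" and r_eq: "s * m + c = r + 1"
    and k: "k \<ge> r"
  shows "(s + 1) * binom2 (k + 2 - (r + 1)) - (s - c) * binom2 (k + 2 - (r + m + 1))
           - c * binom2 (k + 2 - (r + m + 1 + 1))
         = binom2 (k + 2) - binom2 (r + 2) - (\<Sum>j\<in>{1..k - r}. pos_part (r + j + 1 - j * (s + 1)))"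
  using k
proof (induction k rule: int_ge_induct)
  case base
  have "s * (-1) < s * m" using r_eq r c by linarith
  then have "m \<ge> 0" using c mult_less_cancel_left_pos[of s "-1" m] by simp
  then show ?case by (simp add: binom2_def)
next
  case (step k)
  define n where "n = k + 1 - r"
  have "{1..k + 1 - r} = insert n {1..k - r}" "n \<notin> {1..k - r}"
    using step unfolding n_def by auto
  then have sum_step: "(\<Sum>j\<in>{1..k + 1 - r}. pos_part (r + j + 1 - j * (s + 1)))
      = (\<Sum>j\<in>{1..k - r}. pos_part (r + j + 1 - j * (s + 1))) + pos_part (s * m + c - s * n)"
    using r_eq by (simp add: algebra_simps)
  have shifts: "k + 2 - (r + 1) = n" "k + 2 - (r + m + 1) = n - m"
    "k + 2 - (r + m + 1 + 1) = n - m - 1" "pos_part (k + 2) = n + s * m + c"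
    using step r r_eq by (simp_all add: n_def pos_part_def)
  have increment: "(s + 1) * pos_part (k + 2 - (r + 1)) - (s - c) * pos_part (k + 2 - (r + m + 1))
      - c * pos_part (k + 2 - (r + m + 1 + 1)) + pos_part (s * m + c - s * n) = pos_part (k + 2)"
    unfolding shifts using pos_part_increment[OF c, of n m] step by (simp add: n_def)
  have succ_arg: "k + 1 + 2 = (k + 2) + 1" "k + 2 + 1 - x = (k + 2 - x) + 1" for x :: int
    by simp_all
  show ?case
    unfolding succ_arg(1) unfolding succ_arg(2) binom2_succ sum_step
    using step.IH increment by (simp only: distrib_left)
qed

theorem lemma4p4:
  fixes r k t :: int
  assumes "r \<ge> 0" and "k \<ge> r" and "2 \<le> t" and "t \<le> r + 1"
  shows "let \<Omega> = (t * r) div (t - 1) + 1;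
             a = t * (r + 1) + (1 - t) * \<Omega>;
             b = t - 1 - a
         in t * binom2 (k + 2 - (r + 1)) - b * binom2 (k + 2 - \<Omega>) - a * binom2 (k + 2 - (\<Omega> + 1))
            = binom2 (k + 2) - binom2 (r + 2) - (\<Sum>j\<in>{1..k - r}. pos_part (r + j + 1 - j * t))"
proof -
  define s where "s = t - 1"
  define m where "m = r div s"
  define c where "c = r mod s + 1"
  have s: "s \<ge> 1" and t: "t = s + 1" using assms(3) by (simp_all add: s_def)
  have "0 \<le> r mod s" "r mod s < s" using s by simp_all
  then have c: "1 \<le> c" "c \<le> s" unfolding c_def by linarith+
  have r_eq: "s * m + c = r + 1" by (simp add: m_def c_def)
  have "t * r = r + s * r" by (simp add: t algebra_simps)
  then have \<Omega>: "(t * r) div (t - 1) = r + m" using s by (simp add: s_def m_def)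
  have a: "t * (r + 1) + (1 - t) * (r + m + 1) = c" using r_eq by (simp add: t algebra_simps)
  show ?thesis
    unfolding Let_def \<Omega> a
    using binom2_identity_by_remainder[OF assms(1) c r_eq assms(2)] by (simp add: t)
qed

end
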